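(* Let $\mathcal X$ be a finite set (e.g. $\mathcal X=\mathcal V^L$), let $P,Q$ be probability distributions on $\mathcal X$, let $\delta>0$, let $\mathcal X_{\mathrm{Trunc}}=\{\mathbf x\in\mathcal X: Q(\mathbf x)\ge\delta\}$ and $\Delta=1-P(\mathcal X_{\mathrm{Trunc}})$, and assume $\Delta<1$. Let $P^{\mathrm{Trunc}}=P(\cdot\mid \mathcal X_{\mathrm{Trunc}})$ and $$\mathcal L^{\Delta}_{\mathrm{Trunc}}=-\mathbb E_{\mathbf x\sim P}\big[\mathbf 1_{\{Q(\mathbf x)\ge\delta\}}\log Q(\mathbf x)\big].$$ For any $\epsilon>0$, if $\mathcal L^{\Delta}_{\mathrm{Trunc}}\le \epsilon+(1-\Delta)H(P^{\mathrm{Trunc}})$, then there exists $\lambda\in(0,\infty)$ such that the precision–recall pair $(\alpha,\beta)=(\alpha_\lambda(P\Vert Q),\beta_\lambda(P\Vert Q))$ satisfies $\beta\ge (1-\Delta)-\sqrt{\epsilon}$ and $\alpha\ge 1-\sqrt{\frac{\epsilon}{2(1-\Delta)}}$.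
   Context: $H$ denotes Shannon entropy (natural logarithm). For $\lambda\in(0,\infty)$, $\alpha_\lambda(P\Vert Q)=\sum_{\mathbf x}\min(\lambda P(\mathbf x),Q(\mathbf x))$ and $\beta_\lambda(P\Vert Q)=\sum_{\mathbf x}\min(P(\mathbf x),Q(\mathbf x)/\lambda)$. When $Q$ is autoregressive on sequences, $\log Q(\mathbf x)=\sum_{l=1}^L\log Q(x_l\mid\mathbf x_{<l})$, so the loss above is the "Trunc" loss $-\mathbb E_{\mathbf x\sim P}[\sum_l \mathbf 1_{\{Q(\mathbf x)\ge\delta\}}\log Q(x_l\mid \mathbf x_{<l})]$. *)

theory Defs
  imports Complex_Main
begin

text \<open>Distributions on a finite set X are functions 'a => real; all sums range over X.
  Shannon entropy with natural log; ln 0 = 0 in Isabelle, giving the convention 0 log 0 = 0.\<close>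

definition is_distribution :: "'a set \<Rightarrow> ('a \<Rightarrow> real) \<Rightarrow> bool" where
  "is_distribution X P \<longleftrightarrow> (\<forall>x\<in>X. P x \<ge> 0) \<and> (\<Sum>x\<in>X. P x) = 1"

definition shannon_entropy :: "'a set \<Rightarrow> ('a \<Rightarrow> real) \<Rightarrow> real" where
  "shannon_entropy X P = - (\<Sum>x\<in>X. P x * ln (P x))"

definition alpha_pr :: "'a set \<Rightarrow> real \<Rightarrow> ('a \<Rightarrow> real) \<Rightarrow> ('a \<Rightarrow> real) \<Rightarrow> real" where
  "alpha_pr X lam P Q = (\<Sum>x\<in>X. min (lam * P x) (Q x))"

definition beta_pr :: "'a set \<Rightarrow> real \<Rightarrow> ('a \<Rightarrow> real) \<Rightarrow> ('a \<Rightarrow> real) \<Rightarrow> real" where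
  "beta_pr X lam P Q = (\<Sum>x\<in>X. min (P x) (Q x / lam))"

definition cond_dist :: "'a set \<Rightarrow> ('a \<Rightarrow> real) \<Rightarrow> 'a \<Rightarrow> real" where
  "cond_dist A P = (\<lambda>x. if x \<in> A then P x / (\<Sum>y\<in>A. P y) else 0)"

end

theory Submission
  imports Defs
begin

(* Let A be the truncation set, p = P(A) > 0 and R = P( . | A). On A the truncated loss is
   p times the cross entropy of R against Q, i.e. p (H(R) + KL(R || Q)), so the hypothesis says
   p KL(R || Q) <= eps. Pinsker's inequality remains true when Q has total mass at most 1 on A
   and bounds 1 - sum_A min(R, Q) by sqrt (KL(R || Q) / 2). For lam = 1/p the terms of alpha_lam
   over A are exactly min(R, Q), and beta_lam = p alpha_lam; this gives both bounds. *)

definition kl_divergence :: "'a set \<Rightarrow> ('a \<Rightarrow> real) \<Rightarrow> ('a \<Rightarrow> real) \<Rightarrow> real" where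
  "kl_divergence A R Q = (\<Sum>x\<in>A. R x * ln (R x / Q x))"

lemma mult_ln_div_ge_diff:
  fixes p r :: real
  assumes "0 \<le> p" "0 < r"
  shows "p - r \<le> p * ln (p / r)"
proof (cases "p = 0")
  case False
  with assms have "ln (r / p) \<le> r / p - 1"
    by (intro ln_le_minus_one) simp
  moreover have "ln (r / p) = - ln (p / r)"
    using assms False by (simp add: ln_div)
  ultimately have "1 - r / p \<le> ln (p / r)" by linarith
  from mult_left_mono[OF this assms(1)] show ?thesis
    using False by (simp add: right_diff_distrib)
qed (use assms in simp)

lemma log_sum_inequality:
  fixes p q :: "'a \<Rightarrow> real"
  assumes "finite S" "\<And>x. x \<in> S \<Longrightarrow> 0 \<le> p x" "\<And>x. x \<in> S \<Longrightarrow> 0 < q x"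
  shows "(\<Sum>x\<in>S. p x) * ln ((\<Sum>x\<in>S. p x) / (\<Sum>x\<in>S. q x)) \<le> kl_divergence S p q"
proof (cases "(\<Sum>x\<in>S. p x) = 0")
  case True
  then have "\<forall>x\<in>S. p x = 0" using sum_nonneg_eq_0_iff[OF assms(1)] assms(2) by blast
  then show ?thesis using True by (simp add: kl_divergence_def)
next
  case False
  define a where "a = (\<Sum>x\<in>S. p x)"
  define b where "b = (\<Sum>x\<in>S. q x)"
  have "S \<noteq> {}" using False by auto
  then have "0 < a" "0 < b"
    using False assms sum_nonneg[of S p] unfolding a_def b_def by (force, intro sum_pos) auto
  have pointwise: "p x - q x * (a / b) \<le> p x * ln (p x / q x) - p x * ln (a / b)" if "x \<in> S" for x
  proof (cases "p x = 0")
    case False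
    have "0 < p x" "0 < q x" using False assms that by (auto simp: order_le_less)
    then have "p x * ln (p x / (q x * (a / b))) = p x * ln (p x / q x) - p x * ln (a / b)"
      using \<open>0 < a\<close> \<open>0 < b\<close> by (simp add: ln_div ln_mult algebra_simps)
    with mult_ln_div_ge_diff[of "p x" "q x * (a / b)"] show ?thesis
      using assms that \<open>0 < a\<close> \<open>0 < b\<close> by simp
  qed (use assms that \<open>0 < a\<close> \<open>0 < b\<close> in \<open>simp add: less_imp_le\<close>)
  have "0 = (\<Sum>x\<in>S. p x - q x * (a / b))"
    unfolding sum_subtractf sum_distrib_right[symmetric] a_def[symmetric] b_def[symmetric]
    using \<open>0 < b\<close> by simp
  also have "\<dots> \<le> (\<Sum>x\<in>S. p x * ln (p x / q x) - p x * ln (a / b))"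
    by (intro sum_mono pointwise)
  also have "\<dots> = kl_divergence S p q - a * ln (a / b)"
    by (simp add: kl_divergence_def sum_subtractf sum_distrib_right[symmetric] a_def)
  finally show ?thesis unfolding a_def b_def by linarith
qed

lemma kl_divergence_ge_two_blocks:
  fixes R Q :: "'a \<Rightarrow> real"
  assumes "finite A" "B \<subseteq> A" "\<And>x. x \<in> A \<Longrightarrow> 0 \<le> R x" "\<And>x. x \<in> A \<Longrightarrow> 0 < Q x"
  shows "(\<Sum>x\<in>B. R x) * ln ((\<Sum>x\<in>B. R x) / (\<Sum>x\<in>B. Q x))
       + (\<Sum>x\<in>A - B. R x) * ln ((\<Sum>x\<in>A - B. R x) / (\<Sum>x\<in>A - B. Q x))
       \<le> kl_divergence A R Q"
proof -
  have "finite B" using assms(1,2) finite_subset by blast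
  then have "(\<Sum>x\<in>B. R x) * ln ((\<Sum>x\<in>B. R x) / (\<Sum>x\<in>B. Q x)) \<le> kl_divergence B R Q"
    using assms by (intro log_sum_inequality) auto
  moreover have "(\<Sum>x\<in>A - B. R x) * ln ((\<Sum>x\<in>A - B. R x) / (\<Sum>x\<in>A - B. Q x))
      \<le> kl_divergence (A - B) R Q"
    using assms by (intro log_sum_inequality) auto
  moreover have "kl_divergence A R Q = kl_divergence (A - B) R Q + kl_divergence B R Q"
    unfolding kl_divergence_def using assms(2,1) by (rule sum.subset_diff)
  ultimately show ?thesis by linarith
qed

lemma binary_pinsker_lt_one:
  fixes a b :: real
  assumes "0 < b" "b \<le> a" "a < 1"
  shows "2 * (a - b)^2 \<le> a * (ln a - ln b) + (1 - a) * (ln (1 - a) - ln (1 - b))"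
proof -
  define g where "g t = a * (ln a - ln t) + (1 - a) * (ln (1 - a) - ln (1 - t)) - 2 * (a - t)^2"
    for t :: real
  have "g a \<le> g b"
  proof (rule DERIV_nonpos_imp_nonincreasing[OF \<open>b \<le> a\<close>])
    fix t assume t: "b \<le> t" "t \<le> a"
    then have "0 < t" "t < 1" using assms by auto
    have "DERIV g t :> a * (- (1 / t)) + (1 - a) * (1 / (1 - t)) + 4 * (a - t)"
      unfolding g_def using \<open>0 < t\<close> \<open>t < 1\<close> by (auto intro!: derivative_eq_intros)
    also have "a * (- (1 / t)) + (1 - a) * (1 / (1 - t)) + 4 * (a - t)
        = (a - t) * (4 - 1 / (t * (1 - t)))"
      using \<open>0 < t\<close> \<open>t < 1\<close> by (simp add: field_simps)
    finally have deriv: "DERIV g t :> (a - t) * (4 - 1 / (t * (1 - t)))" .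
    have "4 \<le> 1 / (t * (1 - t))"
      using \<open>0 < t\<close> \<open>t < 1\<close> zero_le_power2[of "2 * t - 1"]
      by (simp add: field_simps power2_eq_square)
    then have "(a - t) * (4 - 1 / (t * (1 - t))) \<le> 0"
      using t by (intro mult_nonneg_nonpos) auto
    with deriv show "\<exists>y. DERIV g t :> y \<and> y \<le> 0" by blast
  qed
  then show ?thesis by (simp add: g_def)
qed

lemma two_one_minus_sq_le_neg_ln:
  fixes b :: real
  assumes "0 < b" "b \<le> 1"
  shows "2 * (1 - b)^2 \<le> - ln b"
proof -
  define g where "g t = - ln t - 2 * (1 - t)^2" for t :: real
  have "g 1 \<le> g b"
  proof (rule DERIV_nonpos_imp_nonincreasing[OF \<open>b \<le> 1\<close>])
    fix t assume t: "b \<le> t" "t \<le> 1"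
    then have "0 < t" using assms by auto
    then have "DERIV g t :> - ((1 - 2 * t)^2 / t)"
      unfolding g_def by (auto intro!: derivative_eq_intros simp: field_simps power2_eq_square)
    then show "\<exists>y. DERIV g t :> y \<and> y \<le> 0"
      using \<open>0 < t\<close> by auto
  qed
  then show ?thesis by (simp add: g_def)
qed

lemma binary_pinsker:
  fixes a b :: real
  assumes "0 < b" "b \<le> a" "a \<le> 1"
  shows "2 * (a - b)^2 \<le> a * ln (a / b) + (1 - a) * ln ((1 - a) / (1 - b))"
  \<comment> \<open>a = 1 is separate: the monotonicity argument would need ln (1 - t) differentiable at t = 1.\<close>
proof (cases "a = 1")
  case True
  then show ?thesis using two_one_minus_sq_le_neg_ln[of b] assms by (simp add: ln_div)
next
  case False
  then show ?thesis using binary_pinsker_lt_one[of b a] assms by (simp add: ln_div)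
qed

lemma mult_ln_div_antimono:
  fixes u c d :: real
  assumes "0 \<le> u" "c \<le> d" "u \<noteq> 0 \<Longrightarrow> 0 < c"
  shows "u * ln (u / d) \<le> u * ln (u / c)"
proof (cases "u = 0")
  case False
  with assms have "ln (u / d) \<le> ln (u / c)"
    by (subst ln_le_cancel_iff) (auto intro: divide_left_mono)
  with assms(1) show ?thesis by (rule mult_left_mono[rotated])
qed simp

lemma pinsker_subprobability:
  fixes R Q :: "'a \<Rightarrow> real"
  assumes "finite A" "\<And>x. x \<in> A \<Longrightarrow> 0 \<le> R x" "(\<Sum>x\<in>A. R x) = 1"
    and "\<And>x. x \<in> A \<Longrightarrow> 0 < Q x" "(\<Sum>x\<in>A. Q x) \<le> 1"
  shows "2 * (1 - (\<Sum>x\<in>A. min (R x) (Q x)))^2 \<le> kl_divergence A R Q"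
proof -
  \<comment> \<open>Coarse-grain to the block where R exceeds Q and its complement; replacing the mass c of Q
    off the block by the larger 1 - b only decreases the binary divergence.\<close>
  define B where "B = {x\<in>A. Q x < R x}"
  define a where "a = (\<Sum>x\<in>B. R x)"
  define b where "b = (\<Sum>x\<in>B. Q x)"
  define c where "c = (\<Sum>x\<in>A - B. Q x)"
  have split: "(\<Sum>x\<in>A. f x) = (\<Sum>x\<in>B. f x) + (\<Sum>x\<in>A - B. f x)" for f :: "'a \<Rightarrow> real"
    using sum.subset_diff[of B A f] assms(1) by (simp add: B_def)
  have R_rest: "(\<Sum>x\<in>A - B. R x) = 1 - a"
    using split[of R] assms(3) by (simp add: a_def)
  have "a \<le> 1"
    using R_rest assms(2) sum_nonneg[of "A - B" R] by auto
  have "(\<Sum>x\<in>B. min (R x) (Q x)) = b"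
    unfolding b_def by (rule sum.cong) (auto simp: B_def)
  moreover have "(\<Sum>x\<in>A - B. min (R x) (Q x)) = 1 - a"
    unfolding R_rest[symmetric] by (rule sum.cong) (auto simp: B_def)
  ultimately have gap: "1 - (\<Sum>x\<in>A. min (R x) (Q x)) = a - b"
    using split[of "\<lambda>x. min (R x) (Q x)"] by simp
  have "a * ln (a / b) + (1 - a) * ln ((1 - a) / c) \<le> kl_divergence A R Q"
    using kl_divergence_ge_two_blocks[of A B R Q] assms R_rest
    by (simp add: a_def b_def c_def B_def)
  moreover have "(1 - a) * ln ((1 - a) / (1 - b)) \<le> (1 - a) * ln ((1 - a) / c)"
  proof (rule mult_ln_div_antimono)
    show "0 \<le> 1 - a" "c \<le> 1 - b"
      using \<open>a \<le> 1\<close> split[of Q] assms(5) by (simp_all add: b_def c_def)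
    assume "1 - a \<noteq> 0"
    then have "A - B \<noteq> {}" using R_rest by force
    then show "0 < c" unfolding c_def using assms(1,4) by (intro sum_pos) auto
  qed
  moreover have "2 * (a - b)^2 \<le> a * ln (a / b) + (1 - a) * ln ((1 - a) / (1 - b))"
  proof (cases "B = {}")
    case False
    have "finite B" using assms(1) by (simp add: B_def)
    have "0 < b" unfolding b_def using False \<open>finite B\<close> assms(4) by (intro sum_pos) (auto simp: B_def)
    moreover have "b \<le> a"
      unfolding a_def b_def by (intro sum_mono) (auto simp: B_def)
    ultimately show ?thesis using binary_pinsker \<open>a \<le> 1\<close> by blast
  qed (simp add: a_def b_def)
  ultimately show ?thesis unfolding gap by linarith
qed

lemma shannon_entropy_eq_on_support:
  assumes "finite X" "A \<subseteq> X" "\<And>x. x \<in> X - A \<Longrightarrow> R x = 0"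
  shows "shannon_entropy X R = shannon_entropy A R"
  unfolding shannon_entropy_def using assms by (simp add: sum.mono_neutral_right)

lemma sum_cond_dist:
  assumes "(\<Sum>x\<in>A. P x) \<noteq> 0"
  shows "(\<Sum>x\<in>A. cond_dist A P x) = 1"
  using assms by (simp add: cond_dist_def sum_divide_distrib[symmetric])

lemma cond_dist_nonneg:
  assumes "\<And>x. x \<in> A \<Longrightarrow> 0 \<le> P x"
  shows "0 \<le> cond_dist A P x"
  using assms by (simp add: cond_dist_def sum_nonneg)

lemma kl_divergence_eq_cross_entropy_minus_entropy:
  assumes "\<And>x. x \<in> A \<Longrightarrow> 0 \<le> R x" "\<And>x. x \<in> A \<Longrightarrow> 0 < Q x"
  shows "kl_divergence A R Q = - (\<Sum>x\<in>A. R x * ln (Q x)) - shannon_entropy A R"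
proof -
  have "R x * ln (R x / Q x) = R x * ln (R x) - R x * ln (Q x)" if "x \<in> A" for x
    using assms[OF that] by (cases "R x = 0") (auto simp: ln_div algebra_simps)
  then show ?thesis
    by (simp add: kl_divergence_def shannon_entropy_def sum_subtractf)
qed

lemma truncated_cross_entropy_eq:
  fixes X :: "'a set" and T :: "'a \<Rightarrow> bool"
  defines "A \<equiv> {x\<in>X. T x}"
  assumes "finite X" "0 < (\<Sum>x\<in>A. P x)"
    and "\<And>x. x \<in> X \<Longrightarrow> 0 \<le> P x" "\<And>x. x \<in> A \<Longrightarrow> 0 < Q x"
  shows "- (\<Sum>x\<in>X. P x * (if T x then ln (Q x) else 0))
    = (\<Sum>x\<in>A. P x) * (shannon_entropy X (cond_dist A P) + kl_divergence A (cond_dist A P) Q)"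
proof -
  have "(\<Sum>x\<in>X. P x * (if T x then ln (Q x) else 0)) = (\<Sum>x\<in>A. P x * ln (Q x))"
    unfolding A_def using assms(2) by (auto simp: sum.inter_filter intro: sum.cong)
  moreover have "shannon_entropy X (cond_dist A P) = shannon_entropy A (cond_dist A P)"
    using assms(2) by (intro shannon_entropy_eq_on_support) (auto simp: A_def cond_dist_def)
  moreover have "kl_divergence A (cond_dist A P) Q
      = - (\<Sum>x\<in>A. cond_dist A P x * ln (Q x)) - shannon_entropy A (cond_dist A P)"
    using assms(4,5) by (intro kl_divergence_eq_cross_entropy_minus_entropy cond_dist_nonneg)
      (auto simp: A_def)
  moreover have "(\<Sum>x\<in>A. P x) * (\<Sum>x\<in>A. cond_dist A P x * ln (Q x)) = (\<Sum>x\<in>A. P x * ln (Q x))"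
    using assms(3) by (simp add: cond_dist_def sum_distrib_left)
  ultimately show ?thesis by (simp add: algebra_simps)
qed

lemma beta_pr_eq_alpha_pr_div:
  assumes "0 < lam"
  shows "beta_pr X lam P Q = alpha_pr X lam P Q / lam"
proof -
  have "min (P x) (Q x / lam) = min (lam * P x) (Q x) / lam" for x
    using assms by (simp add: min_divide_distrib_right)
  then show ?thesis by (simp add: alpha_pr_def beta_pr_def sum_divide_distrib)
qed

lemma sum_min_cond_dist_le_alpha_pr:
  assumes "finite X" "A \<subseteq> X" "0 < (\<Sum>x\<in>A. P x)"
    and "\<And>x. x \<in> X \<Longrightarrow> 0 \<le> P x" "\<And>x. x \<in> X \<Longrightarrow> 0 \<le> Q x"
  shows "(\<Sum>x\<in>A. min (cond_dist A P x) (Q x)) \<le> alpha_pr X (1 / (\<Sum>x\<in>A. P x)) P Q"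
proof -
  have "(\<Sum>x\<in>A. min (cond_dist A P x) (Q x)) = (\<Sum>x\<in>A. min (1 / (\<Sum>x\<in>A. P x) * P x) (Q x))"
    by (simp add: cond_dist_def)
  also have "\<dots> \<le> alpha_pr X (1 / (\<Sum>x\<in>A. P x)) P Q"
    unfolding alpha_pr_def using assms by (intro sum_mono2) auto
  finally show ?thesis .
qed

lemma le_sqrt_of_weighted_square_le:
  fixes p t \<epsilon> :: real
  assumes "0 < p" "p \<le> 1" "p * (2 * t^2) \<le> \<epsilon>"
  shows "t \<le> sqrt (\<epsilon> / (2 * p))" "p * t \<le> sqrt \<epsilon>"
proof -
  show "t \<le> sqrt (\<epsilon> / (2 * p))"
    using assms by (intro real_le_rsqrt) (simp add: field_simps)
  have "0 \<le> p * (2 * t^2)"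
    using assms(1) by simp
  with assms(3) have "0 \<le> \<epsilon>" by linarith
  have "(p * t)^2 = p * (p * t^2)"
    by (simp add: power2_eq_square)
  also have "\<dots> \<le> 1 * (\<epsilon> / 2)"
    using assms by (intro mult_mono) auto
  also have "\<dots> \<le> \<epsilon>"
    using \<open>0 \<le> \<epsilon>\<close> by simp
  finally show "p * t \<le> sqrt \<epsilon>"
    by (rule real_le_rsqrt)
qed

theorem proposition5p2:
  fixes X :: "'a set" and P Q :: "'a \<Rightarrow> real" and \<delta> \<epsilon> :: real
  assumes "finite X"
    and "is_distribution X P" and "is_distribution X Q"
    and "\<delta> > 0"
    and "1 - (\<Sum>x\<in>{x\<in>X. Q x \<ge> \<delta>}. P x) < 1"
    and "\<epsilon> > 0"
    and "- (\<Sum>x\<in>X. P x * (if Q x \<ge> \<delta> then ln (Q x) else 0))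
          \<le> \<epsilon> + (1 - (1 - (\<Sum>x\<in>{x\<in>X. Q x \<ge> \<delta>}. P x)))
                 * shannon_entropy X (cond_dist {x\<in>X. Q x \<ge> \<delta>} P)"
  shows "\<exists>lam>0. beta_pr X lam P Q \<ge> (1 - (1 - (\<Sum>x\<in>{x\<in>X. Q x \<ge> \<delta>}. P x))) - sqrt \<epsilon>
             \<and> alpha_pr X lam P Q \<ge> 1 - sqrt (\<epsilon> / (2 * (1 - (1 - (\<Sum>x\<in>{x\<in>X. Q x \<ge> \<delta>}. P x)))))"
proof -
  define A where "A = {x\<in>X. Q x \<ge> \<delta>}"
  define p where "p = (\<Sum>x\<in>A. P x)"
  define overlap where "overlap = (\<Sum>x\<in>A. min (cond_dist A P x) (Q x))"
  have P: "\<And>x. x \<in> X \<Longrightarrow> 0 \<le> P x" "(\<Sum>x\<in>X. P x) = 1"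
    and Q: "\<And>x. x \<in> X \<Longrightarrow> 0 \<le> Q x" "(\<Sum>x\<in>X. Q x) = 1"
    using assms(2,3) by (auto simp: is_distribution_def)
  have "A \<subseteq> X" "finite A" and Q_pos: "\<And>x. x \<in> A \<Longrightarrow> 0 < Q x"
    using assms(1,4) by (auto simp: A_def)
  have "0 < p" "p \<le> 1" "(\<Sum>x\<in>A. Q x) \<le> 1"
    using assms(5) P Q sum_mono2[OF assms(1) \<open>A \<subseteq> X\<close>, of P] sum_mono2[OF assms(1) \<open>A \<subseteq> X\<close>, of Q]
    by (auto simp: p_def A_def)
  have "p * kl_divergence A (cond_dist A P) Q \<le> \<epsilon>"
    using assms(7) truncated_cross_entropy_eq[OF assms(1), where T = "\<lambda>x. Q x \<ge> \<delta>" and P = P and Q = Q]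
      \<open>0 < p\<close> P(1) Q_pos
    unfolding A_def[symmetric] p_def[symmetric] by (auto simp: algebra_simps)
  moreover have "2 * (1 - overlap)^2 \<le> kl_divergence A (cond_dist A P) Q"
    unfolding overlap_def using \<open>0 < p\<close> P(1) \<open>A \<subseteq> X\<close>
    by (intro pinsker_subprobability[OF \<open>finite A\<close> _ _ Q_pos \<open>(\<Sum>x\<in>A. Q x) \<le> 1\<close>]
        cond_dist_nonneg sum_cond_dist) (auto simp: p_def)
  ultimately have "p * (2 * (1 - overlap)^2) \<le> \<epsilon>"
    using \<open>0 < p\<close> by (meson less_imp_le mult_left_mono order_trans)
  note gap = le_sqrt_of_weighted_square_le[OF \<open>0 < p\<close> \<open>p \<le> 1\<close> this]
  have alpha: "overlap \<le> alpha_pr X (1 / p) P Q"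
    unfolding overlap_def p_def using \<open>0 < p\<close> P(1) Q(1) \<open>A \<subseteq> X\<close>
    by (intro sum_min_cond_dist_le_alpha_pr[OF assms(1)]) (auto simp: p_def)
  then have "p * overlap \<le> beta_pr X (1 / p) P Q"
    using \<open>0 < p\<close> by (simp add: beta_pr_eq_alpha_pr_div)
  with alpha gap \<open>0 < p\<close> show ?thesis
    unfolding A_def[symmetric] p_def[symmetric]
    by (intro exI[of _ "1 / p"]) (auto simp: algebra_simps)
qed

end
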